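(* Let $\{K(\cdot\mid\theta):\theta\in\Theta\}$ be a family of probability density functions on a space $X$, let $P_0$ be a probability distribution on $\Theta$, and let $(\theta_j)_{j\ge1}$ be independent and identically distributed with distribution $P_0$, independent of random weight sequences $\mathbf{w_1}=(w_{1j})_{j\ge1}$ and $\mathbf{w_2}=(w_{2j})_{j\ge1}$, where $w_{ij}\ge0$ and $\sum_{j}w_{ij}=1$ for $i=1,2$. Consider the random mixtures $f_i(x)=\sum_{j=1}^\infty w_{ij}\,K(x\mid\theta_j)$, $i=1,2$. Let $\alpha=\mathbb{E}\left\{\int_X K(x\mid\theta_j)^2\,dx\right\}$ and $\beta=\mathbb{E}\left\{\int_X K(x\mid\theta_j)K(x\mid\theta_k)\,dx\right\}$ for $j\neq k$ (these do not depend on $j,k$), and assume $\alpha<\infty$. Then $$\mathbb{E}\left[\,d_2(f_1,f_2)\mid \mathbf{w_1},\mathbf{w_2}\right]=(\alpha-\beta)\sum_{j=1}^\infty (w_{1j}-w_{2j})^2 .$$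
   Context: $d_2(f_1,f_2)=\int_X\left(f_1(x)-f_2(x)\right)^2dx$ (the squared $L_2$ distance, called the $L_2$ distance in the paper). *)

theory Defs
  imports "HOL-Probability.Probability"
begin

definition mixture :: "(nat \<Rightarrow> real) \<Rightarrow> ('x \<Rightarrow> 't \<Rightarrow> real) \<Rightarrow> (nat \<Rightarrow> 't) \<Rightarrow> 'x \<Rightarrow> real" where
  "mixture w K \<theta> x = (\<Sum>j. w j * K x (\<theta> j))"

definition d2 :: "'x measure \<Rightarrow> ('x \<Rightarrow> real) \<Rightarrow> ('x \<Rightarrow> real) \<Rightarrow> ennreal" where
  "d2 M f g = (\<integral>\<^sup>+ x. ennreal ((f x - g x)^2) \<partial>M)"

end

theory Submission
  imports Defs
begin

text \<open>
  On the product space \<open>\<Theta>\<^sup>\<nat> \<times> X\<close> put \<open>h\<^sub>j(\<theta>, x) = K(x | \<theta>\<^sub>j)\<close>, so that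
  \<open>f\<^sub>1 - f\<^sub>2 = \<Sum>\<^sub>j c\<^sub>j h\<^sub>j\<close> with \<open>c = w\<^sub>1 - w\<^sub>2\<close> and the expected distance is \<open>\<integral>(\<Sum>\<^sub>j c\<^sub>j h\<^sub>j)\<^sup>2\<close>.
  Since the atoms are i.i.d., injective reindexings preserve their law, so the Gram matrix
  \<open>\<integral>h\<^sub>j h\<^sub>k\<close> is \<open>\<alpha>\<close> on the diagonal and \<open>\<beta>\<close> off it. For finite sums this gives
  \<open>\<integral>(\<Sum>\<^sub>j c\<^sub>j h\<^sub>j)\<^sup>2 = (\<alpha> - \<beta>) \<Sum>\<^sub>j c\<^sub>j\<^sup>2 + \<beta> (\<Sum>\<^sub>j c\<^sub>j)\<^sup>2\<close>, and \<open>\<Sum>\<^sub>j c\<^sub>j = 0\<close>.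
  The passage to the infinite sum is dominated convergence: by Cauchy-Schwarz every squared
  partial sum is bounded by \<open>(\<Sum>\<^sub>j |c\<^sub>j|) (\<Sum>\<^sub>j |c\<^sub>j| h\<^sub>j\<^sup>2)\<close>, whose integral is
  \<open>\<alpha> (\<Sum>\<^sub>j |c\<^sub>j|)\<^sup>2 < \<infinity>\<close>.
\<close>

lemma square_weighted_sum_le:
  fixes p x :: "nat \<Rightarrow> real"
  assumes "\<And>j. j \<in> S \<Longrightarrow> p j \<ge> 0"
  shows "(\<Sum>j\<in>S. p j * x j)^2 \<le> (\<Sum>j\<in>S. p j) * (\<Sum>j\<in>S. p j * (x j)^2)"
proof -
  have "(\<Sum>j\<in>S. p j * x j) = (\<Sum>j\<in>S. sqrt (p j) * (sqrt (p j) * x j))"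
    using assms by (intro sum.cong) (auto simp flip: mult.assoc)
  also have "(\<dots>)^2 \<le> (\<Sum>j\<in>S. (sqrt (p j))^2) * (\<Sum>j\<in>S. (sqrt (p j) * x j)^2)"
    by (rule Cauchy_Schwarz_ineq_sum)
  also have "\<dots> = (\<Sum>j\<in>S. p j) * (\<Sum>j\<in>S. p j * (x j)^2)"
    using assms by (simp add: power_mult_distrib)
  finally show ?thesis .
qed

lemma square_sum_abs_mult_le_suminf:
  fixes c x :: "nat \<Rightarrow> real"
  assumes c: "summable (\<lambda>j. \<bar>c j\<bar>)" and cx: "summable (\<lambda>j. \<bar>c j\<bar> * (x j)^2)"
    and "finite S"
  shows "(\<Sum>j\<in>S. \<bar>c j * x j\<bar>)^2 \<le> (\<Sum>j. \<bar>c j\<bar>) * (\<Sum>j. \<bar>c j\<bar> * (x j)^2)"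
proof -
  have "(\<Sum>j\<in>S. \<bar>c j\<bar> * \<bar>x j\<bar>)^2 \<le> (\<Sum>j\<in>S. \<bar>c j\<bar>) * (\<Sum>j\<in>S. \<bar>c j\<bar> * \<bar>x j\<bar>^2)"
    by (rule square_weighted_sum_le) simp
  also have "\<dots> \<le> (\<Sum>j. \<bar>c j\<bar>) * (\<Sum>j. \<bar>c j\<bar> * (x j)^2)"
  proof (rule mult_mono)
    show "(\<Sum>j\<in>S. \<bar>c j\<bar>) \<le> (\<Sum>j. \<bar>c j\<bar>)"
      by (rule sum_le_suminf[OF c \<open>finite S\<close>]) simp
    show "(\<Sum>j\<in>S. \<bar>c j\<bar> * \<bar>x j\<bar>^2) \<le> (\<Sum>j. \<bar>c j\<bar> * (x j)^2)"
      using sum_le_suminf[OF cx \<open>finite S\<close>] by simp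
  qed (simp_all add: sum_nonneg suminf_nonneg[OF c])
  finally show ?thesis by (simp add: abs_mult)
qed

lemma summable_mult_of_weighted_square_summable:
  fixes c x :: "nat \<Rightarrow> real"
  assumes c: "summable (\<lambda>j. \<bar>c j\<bar>)" and cx: "summable (\<lambda>j. \<bar>c j\<bar> * (x j)^2)"
  shows "summable (\<lambda>j. c j * x j)"
proof (rule summable_rabs_cancel, rule bounded_imp_summable)
  show "(\<Sum>j\<le>n. \<bar>c j * x j\<bar>) \<le> sqrt ((\<Sum>j. \<bar>c j\<bar>) * (\<Sum>j. \<bar>c j\<bar> * (x j)^2))" for n
    using square_sum_abs_mult_le_suminf[OF c cx, of "{..n}"] by (simp add: real_le_rsqrt)
qed simp

lemma summable_square_of_summable_abs:
  fixes c :: "nat \<Rightarrow> real"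
  assumes c: "summable (\<lambda>j. \<bar>c j\<bar>)"
  shows "summable (\<lambda>j. (c j)^2)"
proof -
  have "eventually (\<lambda>j. \<bar>c j\<bar> < 1) sequentially"
    using order_tendstoD(2)[OF summable_LIMSEQ_zero[OF c] zero_less_one] .
  then obtain N where N: "\<bar>c j\<bar> < 1" if "j \<ge> N" for j by (auto simp: eventually_at_top_linorder)
  have "norm ((c j)^2) \<le> \<bar>c j\<bar>" if "j \<ge> N" for j
  proof -
    have "\<bar>c j\<bar> * \<bar>c j\<bar> \<le> 1 * \<bar>c j\<bar>"
      using N[OF that] by (intro mult_right_mono) simp_all
    then show ?thesis by (simp add: power2_eq_square)
  qed
  then show ?thesis by (rule summable_comparison_test'[OF c])
qed

lemma integrable_mult_of_square_integrable:
  fixes f g :: "'a \<Rightarrow> real"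
  assumes [measurable]: "f \<in> borel_measurable N" "g \<in> borel_measurable N"
    and f2: "integrable N (\<lambda>z. (f z)^2)" and g2: "integrable N (\<lambda>z. (g z)^2)"
  shows "integrable N (\<lambda>z. f z * g z)"
proof (rule Bochner_Integration.integrable_bound[OF Bochner_Integration.integrable_add[OF f2 g2]])
  have "\<bar>f z * g z\<bar> \<le> (f z)^2 + (g z)^2" for z
  proof -
    have "2 * (\<bar>f z\<bar> * \<bar>g z\<bar>) \<le> (f z)^2 + (g z)^2" "0 \<le> \<bar>f z\<bar> * \<bar>g z\<bar>"
      using sum_squares_bound[of "\<bar>f z\<bar>" "\<bar>g z\<bar>"] by (simp_all add: mult.assoc)
    then show ?thesis unfolding abs_mult by linarith
  qed
  then show "AE z in N. norm (f z * g z) \<le> norm ((f z)^2 + (g z)^2)"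
    by (intro AE_I2) simp
qed simp

lemma integral_square_sum_Gram:
  fixes h :: "nat \<Rightarrow> 'a \<Rightarrow> real"
  assumes int: "\<And>j k. integrable N (\<lambda>z. h j z * h k z)"
    and Gram: "\<And>j k. (\<integral>z. h j z * h k z \<partial>N) = (if j = k then A else B)"
    and "finite S"
  shows "(\<integral>z. (\<Sum>j\<in>S. c j * h j z)^2 \<partial>N) = (A - B) * (\<Sum>j\<in>S. (c j)^2) + B * (\<Sum>j\<in>S. c j)^2"
proof -
  have "(\<integral>z. (\<Sum>j\<in>S. c j * h j z)^2 \<partial>N) = (\<integral>z. (\<Sum>j\<in>S. \<Sum>k\<in>S. c j * c k * (h j z * h k z)) \<partial>N)"
    by (simp add: power2_eq_square sum_product mult_ac)
  also have "\<dots> = (\<Sum>j\<in>S. \<Sum>k\<in>S. c j * c k * (if j = k then A else B))"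
    by (simp add: int Gram)
  also have "\<dots> = (\<Sum>j\<in>S. \<Sum>k\<in>S. c j * c k * B + (if k = j then c j * c k * (A - B) else 0))"
    by (intro sum.cong refl) (auto simp: algebra_simps)
  also have "\<dots> = (\<Sum>j\<in>S. \<Sum>k\<in>S. c j * c k * B) + (\<Sum>j\<in>S. c j * c j * (A - B))"
    using \<open>finite S\<close> by (simp add: sum.distrib)
  also have "\<dots> = (A - B) * (\<Sum>j\<in>S. (c j)^2) + B * (\<Sum>j\<in>S. c j)^2"
    by (simp add: power2_eq_square sum_product sum_distrib_left sum_distrib_right mult_ac)
  finally show ?thesis .
qed

lemma AE_summable_of_summable_integral:
  fixes f :: "nat \<Rightarrow> 'a \<Rightarrow> real"
  assumes int: "\<And>i. integrable M (f i)" and nonneg: "\<And>i x. 0 \<le> f i x"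
    and summ: "summable (\<lambda>i. integral\<^sup>L M (f i))"
  shows "AE x in M. summable (\<lambda>i. f i x)"
proof -
  have [measurable]: "f i \<in> borel_measurable M" for i
    using int by (rule borel_measurable_integrable)
  have "(\<integral>\<^sup>+x. (\<Sum>i. ennreal (f i x)) \<partial>M) = (\<Sum>i. \<integral>\<^sup>+x. ennreal (f i x) \<partial>M)"
    by (rule nn_integral_suminf) measurable
  also have "\<dots> = (\<Sum>i. ennreal (integral\<^sup>L M (f i)))"
    by (simp add: nn_integral_eq_integral int nonneg)
  also have "\<dots> = ennreal (\<Sum>i. integral\<^sup>L M (f i))"
    by (intro suminf_ennreal2 summ integral_nonneg_AE) (simp add: nonneg)
  finally have "AE x in M. (\<Sum>i. ennreal (f i x)) \<noteq> \<infinity>"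
    by (intro nn_integral_PInf_AE) simp_all
  then show ?thesis
    by eventually_elim (rule summable_suminf_not_top[OF nonneg], simp)
qed

lemma AE_summable_weighted_squares:
  fixes h :: "nat \<Rightarrow> 'a \<Rightarrow> real" and c :: "nat \<Rightarrow> real"
  assumes square_int: "\<And>j. integrable N (\<lambda>z. (h j z)^2)"
    and square_integral: "\<And>j. (\<integral>z. (h j z)^2 \<partial>N) = A"
    and c: "summable (\<lambda>j. \<bar>c j\<bar>)"
  shows "AE z in N. summable (\<lambda>j. \<bar>c j\<bar> * (h j z)^2)"
  using c by (intro AE_summable_of_summable_integral) (simp_all add: square_int square_integral summable_mult2)

lemma
  fixes h :: "nat \<Rightarrow> 'a \<Rightarrow> real" and c :: "nat \<Rightarrow> real"
  assumes [measurable]: "\<And>j. h j \<in> borel_measurable N"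
    and square_int: "\<And>j. integrable N (\<lambda>z. (h j z)^2)"
    and Gram: "\<And>j k. (\<integral>z. h j z * h k z \<partial>N) = (if j = k then A else B)"
    and c: "summable (\<lambda>j. \<bar>c j\<bar>)"
  shows integrable_square_series: "integrable N (\<lambda>z. (\<Sum>j. c j * h j z)^2)"
    and integral_square_series:
      "(\<integral>z. (\<Sum>j. c j * h j z)^2 \<partial>N) = (A - B) * (\<Sum>j. (c j)^2) + B * (\<Sum>j. c j)^2"
proof -
  have int: "integrable N (\<lambda>z. h j z * h k z)" for j k
    by (intro integrable_mult_of_square_integrable square_int) measurable
  have A: "(\<integral>z. (h j z)^2 \<partial>N) = A" for j
    using Gram[of j j] by (simp add: power2_eq_square)
  have AE_summ: "AE z in N. summable (\<lambda>j. \<bar>c j\<bar> * (h j z)^2)"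
    by (rule AE_summable_weighted_squares[OF square_int A c])
  define W where "W z = (\<Sum>j. \<bar>c j\<bar>) * (\<Sum>j. \<bar>c j\<bar> * (h j z)^2)" for z
  have W_int: "integrable N W"
    unfolding W_def
  proof (intro integrable_mult_right integrable_suminf)
    show "AE z in N. summable (\<lambda>j. norm (\<bar>c j\<bar> * (h j z)^2))"
      using AE_summ by simp
    show "summable (\<lambda>j. \<integral>z. norm (\<bar>c j\<bar> * (h j z)^2) \<partial>N)"
      using summable_mult2[OF c, of A] by (simp add: A)
  qed (simp add: square_int)
  have lim: "AE z in N. (\<lambda>n. (\<Sum>j<n. c j * h j z)^2) \<longlonglongrightarrow> (\<Sum>j. c j * h j z)^2"
    using AE_summ
  proof eventually_elim
    case (elim z)
    show ?case
      using summable_mult_of_weighted_square_summable[OF c elim]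
      by (intro tendsto_power summable_LIMSEQ)
  qed
  have bound: "AE z in N. norm ((\<Sum>j<n. c j * h j z)^2) \<le> W z" for n
    using AE_summ
  proof eventually_elim
    case (elim z)
    have "\<bar>\<Sum>j<n. c j * h j z\<bar>^2 \<le> (\<Sum>j<n. \<bar>c j * h j z\<bar>)^2"
      by (intro power_mono sum_abs) simp
    also have "\<dots> \<le> W z"
      unfolding W_def by (rule square_sum_abs_mult_le_suminf[OF c elim]) simp
    finally show ?case by simp
  qed
  have "(\<lambda>n. \<integral>z. (\<Sum>j<n. c j * h j z)^2 \<partial>N) \<longlonglongrightarrow> (\<integral>z. (\<Sum>j. c j * h j z)^2 \<partial>N)"
    and "integrable N (\<lambda>z. (\<Sum>j. c j * h j z)^2)"
    by (intro integral_dominated_convergence[OF _ _ W_int lim bound]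
        integrable_dominated_convergence[OF _ _ W_int lim bound]; measurable)+
  moreover have "(\<lambda>n. \<integral>z. (\<Sum>j<n. c j * h j z)^2 \<partial>N)
      \<longlonglongrightarrow> (A - B) * (\<Sum>j. (c j)^2) + B * (\<Sum>j. c j)^2"
    unfolding integral_square_sum_Gram[OF int Gram finite_lessThan]
    using summable_square_of_summable_abs[OF c] summable_rabs_cancel[OF c]
    by (intro tendsto_add tendsto_mult_left tendsto_power summable_LIMSEQ)
  ultimately show "integrable N (\<lambda>z. (\<Sum>j. c j * h j z)^2)"
    and "(\<integral>z. (\<Sum>j. c j * h j z)^2 \<partial>N) = (A - B) * (\<Sum>j. (c j)^2) + B * (\<Sum>j. c j)^2"
    using LIMSEQ_unique by blast+
qed

lemma nn_integral_square_diff_series: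
  fixes h :: "nat \<Rightarrow> 'a \<Rightarrow> real" and a b :: "nat \<Rightarrow> real"
  assumes [measurable]: "\<And>j. h j \<in> borel_measurable N"
    and nonneg: "\<And>j z. z \<in> space N \<Longrightarrow> 0 \<le> h j z"
    and Gram: "\<And>j k. (\<integral>\<^sup>+z. ennreal (h j z * h k z) \<partial>N) = (if j = k then \<alpha> else \<beta>)"
    and finite: "\<alpha> < \<infinity>"
    and a: "summable (\<lambda>j. \<bar>a j\<bar>)" and b: "summable (\<lambda>j. \<bar>b j\<bar>)"
  shows "(\<integral>\<^sup>+z. ennreal (((\<Sum>j. a j * h j z) - (\<Sum>j. b j * h j z))^2) \<partial>N)
    = ennreal ((enn2real \<alpha> - enn2real \<beta>) * (\<Sum>j. (a j - b j)^2) + enn2real \<beta> * (\<Sum>j. a j - b j)^2)"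
proof -
  have square_int: "integrable N (\<lambda>z. (h j z)^2)" for j
    using Gram[of j j] finite by (intro integrableI_nonneg) (simp_all add: power2_eq_square)
  have real_Gram: "(\<integral>z. h j z * h k z \<partial>N) = (if j = k then enn2real \<alpha> else enn2real \<beta>)" for j k
    using Gram[of j k] by (subst integral_eq_nn_integral) (auto intro!: AE_I2 mult_nonneg_nonneg nonneg)
  have square_integral: "(\<integral>z. (h j z)^2 \<partial>N) = enn2real \<alpha>" for j
    using real_Gram[of j j] by (simp add: power2_eq_square)
  have c: "summable (\<lambda>j. \<bar>a j - b j\<bar>)"
    by (rule summable_comparison_test'[OF summable_add[OF a b]]) (simp add: abs_triangle_ineq4)
  have "AE z in N. summable (\<lambda>j. \<bar>a j\<bar> * (h j z)^2)" "AE z in N. summable (\<lambda>j. \<bar>b j\<bar> * (h j z)^2)"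
    by (intro AE_summable_weighted_squares[OF square_int square_integral] a b)+
  then have "AE z in N. (\<Sum>j. a j * h j z) - (\<Sum>j. b j * h j z) = (\<Sum>j. (a j - b j) * h j z)"
  proof eventually_elim
    case (elim z)
    show ?case
      using summable_mult_of_weighted_square_summable[OF a elim(1)]
        summable_mult_of_weighted_square_summable[OF b elim(2)]
      by (simp add: suminf_diff left_diff_distrib)
  qed
  then have "(\<integral>\<^sup>+z. ennreal (((\<Sum>j. a j * h j z) - (\<Sum>j. b j * h j z))^2) \<partial>N)
      = (\<integral>\<^sup>+z. ennreal ((\<Sum>j. (a j - b j) * h j z)^2) \<partial>N)"
    by (intro nn_integral_cong_AE) auto
  also have "\<dots> = ennreal (\<integral>z. (\<Sum>j. (a j - b j) * h j z)^2 \<partial>N)"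
    by (intro nn_integral_eq_integral integrable_square_series[OF _ square_int real_Gram c]) simp_all
  finally show ?thesis
    by (simp add: integral_square_series[OF _ square_int real_Gram c])
qed

lemma nn_integral_PiM_reindex:
  fixes \<sigma> :: "nat \<Rightarrow> nat"
  assumes P: "prob_space P" and \<sigma>: "inj \<sigma>"
    and g: "g \<in> borel_measurable (PiM UNIV (\<lambda>_::nat. P))"
  shows "(\<integral>\<^sup>+\<theta>. g (\<theta> \<circ> \<sigma>) \<partial>PiM UNIV (\<lambda>_. P)) = (\<integral>\<^sup>+\<theta>. g \<theta> \<partial>PiM UNIV (\<lambda>_. P))"
proof -
  let ?\<Omega> = "PiM UNIV (\<lambda>_::nat. P)"
  let ?T = "\<lambda>\<theta>. \<lambda>n\<in>UNIV. \<theta> (\<sigma> n)"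
  have T: "?T \<in> measurable ?\<Omega> ?\<Omega>"
    by (intro measurable_restrict measurable_component_singleton) auto
  have "(\<integral>\<^sup>+\<theta>. g \<theta> \<partial>?\<Omega>) = (\<integral>\<^sup>+\<theta>. g \<theta> \<partial>distr ?\<Omega> ?\<Omega> ?T)"
    using distr_PiM_reindex[of UNIV "\<lambda>_. P" \<sigma> UNIV] P \<sigma> by simp
  also have "\<dots> = (\<integral>\<^sup>+\<theta>. g (?T \<theta>) \<partial>?\<Omega>)"
    by (rule nn_integral_distr[OF T]) (simp add: g)
  finally show ?thesis by (simp add: o_def restrict_def)
qed

lemma nn_integral_PiM_coordinate_pair:
  fixes g :: "'t \<Rightarrow> 't \<Rightarrow> ennreal"
  assumes P: "prob_space P" and g[measurable]: "case_prod g \<in> borel_measurable (P \<Otimes>\<^sub>M P)"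
  shows "(\<integral>\<^sup>+\<theta>. g (\<theta> j) (\<theta> k) \<partial>PiM UNIV (\<lambda>_::nat. P))
    = (if j = k then \<integral>\<^sup>+\<theta>. g (\<theta> 0) (\<theta> 0) \<partial>PiM UNIV (\<lambda>_::nat. P)
       else \<integral>\<^sup>+\<theta>. g (\<theta> 0) (\<theta> 1) \<partial>PiM UNIV (\<lambda>_::nat. P))"
proof (cases "j = k")
  case True
  have "inj (\<lambda>n. n + j)"
    by (simp add: inj_def)
  moreover have "(\<lambda>\<theta>. g (\<theta> 0) (\<theta> 0)) \<in> borel_measurable (PiM UNIV (\<lambda>_::nat. P))"
    by measurable
  ultimately show ?thesis
    using True nn_integral_PiM_reindex[OF P, of "\<lambda>n. n + j" "\<lambda>\<theta>. g (\<theta> 0) (\<theta> 0)"]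
    by (simp add: o_def)
next
  case False
  define \<sigma> where "\<sigma> n = (if n = 0 then j else if n = 1 then k else j + k + n)" for n
  have "inj \<sigma>"
    using False unfolding inj_def \<sigma>_def by auto
  moreover have "(\<lambda>\<theta>. g (\<theta> 0) (\<theta> 1)) \<in> borel_measurable (PiM UNIV (\<lambda>_::nat. P))"
    by measurable
  ultimately show ?thesis
    using False nn_integral_PiM_reindex[OF P, of \<sigma> "\<lambda>\<theta>. g (\<theta> 0) (\<theta> 1)"] by (simp add: \<sigma>_def o_def)
qed

lemma nn_integral_kernel_products_iid:
  fixes M :: "'x measure" and P :: "'t measure" and K :: "'x \<Rightarrow> 't \<Rightarrow> real"
  assumes M: "sigma_finite_measure M" and P: "prob_space P"
    and K_meas: "(\<lambda>(x, t). K x t) \<in> borel_measurable (M \<Otimes>\<^sub>M P)"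
  shows "(\<integral>\<^sup>+z. ennreal (K (snd z) (fst z j) * K (snd z) (fst z k)) \<partial>(PiM UNIV (\<lambda>_::nat. P) \<Otimes>\<^sub>M M))
    = (if j = k then \<integral>\<^sup>+\<theta>. \<integral>\<^sup>+x. ennreal ((K x (\<theta> 0))^2) \<partial>M \<partial>PiM UNIV (\<lambda>_::nat. P)
       else \<integral>\<^sup>+\<theta>. \<integral>\<^sup>+x. ennreal (K x (\<theta> 0) * K x (\<theta> 1)) \<partial>M \<partial>PiM UNIV (\<lambda>_::nat. P))"
proof -
  interpret M: sigma_finite_measure M by (rule M)
  have K_comp[measurable]: "(\<lambda>z. K (f z) (g z)) \<in> borel_measurable L"
    if "f \<in> L \<rightarrow>\<^sub>M M" "g \<in> L \<rightarrow>\<^sub>M P" for L f g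
    using measurable_Pair_compose_split[OF K_meas that] .
  have "(\<lambda>z. ennreal (K (snd z) (fst (fst z)) * K (snd z) (snd (fst z))))
      \<in> borel_measurable ((P \<Otimes>\<^sub>M P) \<Otimes>\<^sub>M M)"
    by measurable
  then have "case_prod (\<lambda>s t. \<integral>\<^sup>+x. ennreal (K x s * K x t) \<partial>M) \<in> borel_measurable (P \<Otimes>\<^sub>M P)"
    using M.borel_measurable_nn_integral_fst by (simp add: case_prod_beta')
  note pair = nn_integral_PiM_coordinate_pair[OF P this, of j k]
  have "(\<lambda>z. ennreal (K (snd z) (fst z j) * K (snd z) (fst z k)))
      \<in> borel_measurable (PiM UNIV (\<lambda>_::nat. P) \<Otimes>\<^sub>M M)"
    by measurable
  from M.nn_integral_fst[OF this, symmetric] pair show ?thesis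
    by (simp add: power2_eq_square)
qed

theorem lemma2:
  fixes M :: "'x measure" and P0 :: "'t measure"
    and K :: "'x \<Rightarrow> 't \<Rightarrow> real"
    and w1 w2 :: "nat \<Rightarrow> real"
  assumes M: "sigma_finite_measure M"
    and P0: "prob_space P0"
    and K_meas: "(\<lambda>(x, t). K x t) \<in> borel_measurable (M \<Otimes>\<^sub>M P0)"
    and K_nonneg: "\<And>x t. x \<in> space M \<Longrightarrow> t \<in> space P0 \<Longrightarrow> K x t \<ge> 0"
    and K_dens: "\<And>t. t \<in> space P0 \<Longrightarrow> (\<integral>\<^sup>+ x. ennreal (K x t) \<partial>M) = 1"
    and w1_nonneg: "\<And>j. w1 j \<ge> 0" and w1_sum: "w1 sums 1"
    and w2_nonneg: "\<And>j. w2 j \<ge> 0" and w2_sum: "w2 sums 1"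
    and alpha_fin:
      "(\<integral>\<^sup>+ (\<theta>::nat \<Rightarrow> 't). (\<integral>\<^sup>+ x. ennreal ((K x (\<theta> 0))^2) \<partial>M) \<partial>(PiM UNIV (\<lambda>_. P0))) < \<infinity>"
  shows
    "(\<integral>\<^sup>+ \<theta>. d2 M (mixture w1 K \<theta>) (mixture w2 K \<theta>) \<partial>(PiM UNIV (\<lambda>_. P0)))
     = ennreal
        ((enn2real (\<integral>\<^sup>+ (\<theta>::nat \<Rightarrow> 't). (\<integral>\<^sup>+ x. ennreal ((K x (\<theta> 0))^2) \<partial>M) \<partial>(PiM UNIV (\<lambda>_. P0)))
          - enn2real (\<integral>\<^sup>+ (\<theta>::nat \<Rightarrow> 't). (\<integral>\<^sup>+ x. ennreal (K x (\<theta> 0) * K x (\<theta> 1)) \<partial>M) \<partial>(PiM UNIV (\<lambda>_. P0))))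
         * (\<Sum>j. (w1 j - w2 j)^2))"
proof -
  interpret M: sigma_finite_measure M by (rule M)
  define h where "h j z = K (snd z) (fst z j)" for j and z :: "(nat \<Rightarrow> 't) \<times> 'x"
  have h_meas[measurable]: "h j \<in> borel_measurable (PiM UNIV (\<lambda>_. P0) \<Otimes>\<^sub>M M)" for j
    unfolding h_def by (rule measurable_Pair_compose_split[OF K_meas]) measurable
  have h_nonneg: "0 \<le> h j z" if "z \<in> space (PiM UNIV (\<lambda>_. P0) \<Otimes>\<^sub>M M)" for j z
    using that unfolding h_def by (auto simp: space_pair_measure space_PiM intro!: K_nonneg)
  note Gram = nn_integral_kernel_products_iid[OF M P0 K_meas, folded h_def]
  have w1_abs: "summable (\<lambda>j. \<bar>w1 j\<bar>)" and w2_abs: "summable (\<lambda>j. \<bar>w2 j\<bar>)"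
    using w1_sum w2_sum w1_nonneg w2_nonneg by (simp_all add: sums_iff)
  have weights_diff_sum: "(\<Sum>j. w1 j - w2 j) = 0"
    using sums_unique[OF sums_diff[OF w1_sum w2_sum]] by simp
  have "(\<lambda>z. ennreal (((\<Sum>j. w1 j * h j z) - (\<Sum>j. w2 j * h j z))^2))
      \<in> borel_measurable (PiM UNIV (\<lambda>_. P0) \<Otimes>\<^sub>M M)"
    by measurable
  from M.nn_integral_fst[OF this]
  have "(\<integral>\<^sup>+\<theta>. d2 M (mixture w1 K \<theta>) (mixture w2 K \<theta>) \<partial>PiM UNIV (\<lambda>_. P0))
      = (\<integral>\<^sup>+z. ennreal (((\<Sum>j. w1 j * h j z) - (\<Sum>j. w2 j * h j z))^2) \<partial>(PiM UNIV (\<lambda>_. P0) \<Otimes>\<^sub>M M))"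
    by (simp add: d2_def mixture_def h_def)
  also have "\<dots> = ennreal ((enn2real (\<integral>\<^sup>+\<theta>. \<integral>\<^sup>+x. ennreal ((K x (\<theta> 0))^2) \<partial>M \<partial>PiM UNIV (\<lambda>_::nat. P0))
      - enn2real (\<integral>\<^sup>+\<theta>. \<integral>\<^sup>+x. ennreal (K x (\<theta> 0) * K x (\<theta> 1)) \<partial>M \<partial>PiM UNIV (\<lambda>_::nat. P0)))
      * (\<Sum>j. (w1 j - w2 j)^2))"
    using nn_integral_square_diff_series[OF h_meas h_nonneg Gram alpha_fin w1_abs w2_abs]
    by (simp add: weights_diff_sum)
  finally show ?thesis .
qed

end
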